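(* Let $M$ be a von Neumann algebra, let $a,b\in M$ with $0\le a,b\le 1$, and let $p$ be a projection in $M$. (a) If $a,b\in pMp$, then $a$ and $b$ are absolutely compatible in $M$ if, and only if, they are absolutely compatible in the von Neumann algebra $pMp$ (with unit $p$). (b) If $a,b\in pMp\oplus(1-p)M(1-p)$, then $a$ and $b$ are absolutely compatible in $M$ if, and only if, $pap$ and $pbp$ are absolutely compatible in $pMp$ and $(1-p)a(1-p)$ and $(1-p)b(1-p)$ are absolutely compatible in $(1-p)M(1-p)$.
   Context: For $x$ in a C$^*$-algebra, $|x|=(x^*x)^{1/2}$. In a unital C$^*$-algebra with unit $e$, elements $0\le a,b\le e$ are absolutely compatible if $|a-b|+|e-a-b|=e$. *)

theory Defs
  imports "HOL-Analysis.Analysis"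
begin

text \<open>A unital complex C*-algebra, encoded on top of a real unital Banach algebra:
  the complex scalar i acts as multiplication by a central element iunit with
  iunit * iunit = -1; the norm is required to be complex-homogeneous; adj is the
  involution (conjugate-linear, anti-multiplicative) and the C*-identity holds.\<close>

class cstar_algebra = real_normed_algebra_1 + banach +
  fixes adj :: "'a \<Rightarrow> 'a"
    and iunit :: "'a"
  assumes adj_adj: "adj (adj x) = x"
    and adj_add: "adj (x + y) = adj x + adj y"
    and adj_scaleR: "adj (r *\<^sub>R x) = r *\<^sub>R adj x"
    and adj_mult: "adj (x * y) = adj y * adj x"
    and iunit_sq: "iunit * iunit = - 1"
    and iunit_central: "iunit * x = x * iunit"
    and adj_iunit: "adj iunit = - iunit"
    and norm_complex_scale:
      "norm ((a *\<^sub>R 1 + b *\<^sub>R iunit) * x) = sqrt (a\<^sup>2 + b\<^sup>2) * norm x"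
    and cstar_identity: "norm (adj x * x) = (norm x)\<^sup>2"

definition clinear_fun :: "('a::cstar_algebra \<Rightarrow> complex) \<Rightarrow> bool" where
  "clinear_fun f \<longleftrightarrow> (\<forall>x y. f (x + y) = f x + f y) \<and>
     (\<forall>r x. f (r *\<^sub>R x) = complex_of_real r * f x) \<and>
     (\<forall>x. f (iunit * x) = \<i> * f x)"

definition bounded_clinear_fun :: "('a::cstar_algebra \<Rightarrow> complex) \<Rightarrow> bool" where
  "bounded_clinear_fun f \<longleftrightarrow> clinear_fun f \<and> (\<exists>K. \<forall>x. cmod (f x) \<le> K * norm x)"

text \<open>V is a predual of M: a norm-closed subspace of the Banach dual of M such that
  the canonical map M \<rightarrow> V* is an isometric surjection onto the bounded
  linear functionals on V.  By Sakai's theorem a C*-algebra admits a predual iff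
  it is a W*-algebra, i.e. (isomorphic to) a von Neumann algebra.\<close>
definition is_predual :: "('a::cstar_algebra \<Rightarrow> complex) set \<Rightarrow> bool" where
  "is_predual V \<longleftrightarrow>
     V \<subseteq> {f. bounded_clinear_fun f} \<and>
     (\<lambda>x. 0) \<in> V \<and>
     (\<forall>f\<in>V. \<forall>g\<in>V. (\<lambda>x. f x + g x) \<in> V) \<and>
     (\<forall>c. \<forall>f\<in>V. (\<lambda>x. c * f x) \<in> V) \<and>
     (\<forall>F g. (\<forall>n. F n \<in> V) \<and> bounded_clinear_fun g \<and>
            (\<lambda>n. onorm (\<lambda>x. F n x - g x)) \<longlonglongrightarrow> 0 \<longrightarrow> g \<in> V) \<and>
     (\<forall>x. norm x = (SUP f\<in>{f\<in>V. onorm f \<le> 1}. cmod (f x))) \<and>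
     (\<forall>\<phi> :: ('a \<Rightarrow> complex) \<Rightarrow> complex.
        (\<forall>f\<in>V. \<forall>g\<in>V. \<phi> (\<lambda>x. f x + g x) = \<phi> f + \<phi> g) \<and>
        (\<forall>c. \<forall>f\<in>V. \<phi> (\<lambda>x. c * f x) = c * \<phi> f) \<and>
        (\<exists>K. \<forall>f\<in>V. cmod (\<phi> f) \<le> K * onorm f)
        \<longrightarrow> (\<exists>x. \<forall>f\<in>V. \<phi> f = f x))"

definition von_neumann_algebra :: "'a::cstar_algebra itself \<Rightarrow> bool" where
  "von_neumann_algebra TYPE('a) \<longleftrightarrow> (\<exists>V :: ('a \<Rightarrow> complex) set. is_predual V)"

definition projection :: "'a::cstar_algebra \<Rightarrow> bool" where
  "projection p \<longleftrightarrow> adj p = p \<and> p * p = p"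

definition corner :: "'a::cstar_algebra \<Rightarrow> 'a set" where
  "corner p = {p * x * p | x. True}"

text \<open>Positivity inside a C*-subalgebra S (used with S = UNIV and S = corner p):
  y is positive in S iff y = z* z for some z in S.\<close>
definition positive_in :: "'a::cstar_algebra set \<Rightarrow> 'a \<Rightarrow> bool" where
  "positive_in S y \<longleftrightarrow> (\<exists>z\<in>S. y = adj z * z)"

definition le_in :: "'a::cstar_algebra set \<Rightarrow> 'a \<Rightarrow> 'a \<Rightarrow> bool" where
  "le_in S a b \<longleftrightarrow> positive_in S (b - a)"

definition abs_in :: "'a::cstar_algebra set \<Rightarrow> 'a \<Rightarrow> 'a" where
  "abs_in S x = (THE y. positive_in S y \<and> y * y = adj x * x)"

definition abs_compatible_in :: "'a::cstar_algebra set \<Rightarrow> 'a \<Rightarrow> 'a \<Rightarrow> 'a \<Rightarrow> bool" where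
  "abs_compatible_in S e a b \<longleftrightarrow> abs_in S (a - b) + abs_in S (e - a - b) = e"

end

theory Submission
  imports Defs "HOL-Complex_Analysis.Cauchy_Integral_Formula"
begin

text \<open>For hermitian \<open>x\<^sub>1 \<in> pMp\<close> and \<open>x\<^sub>2 \<in> (1 - p)M(1 - p)\<close> one has
  \<open>|x\<^sub>1 + x\<^sub>2| = |x\<^sub>1| + |x\<^sub>2|\<close>, the summands computed in the respective corners, and an element
  \<open>y\<^sub>1 + y\<^sub>2\<close> of \<open>pMp \<oplus> (1 - p)M(1 - p)\<close> equals \<open>1\<close> iff \<open>y\<^sub>1 = p\<close> and \<open>y\<^sub>2 = 1 - p\<close>. This gives (b),
  and (a) is the special case where the components in \<open>(1 - p)M(1 - p)\<close> vanish.

  Additivity of \<open>|\<cdot>|\<close> rests on the uniqueness of positive square roots: the fourth root \<open>t\<close> of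
  \<open>x\<^sup>2\<close>, built from the binomial series of \<open>(1 - X)\<^sup>1\<^sup>/\<^sup>4\<close>, lies in the corner of \<open>x\<close>, and
  \<open>t\<^sup>2\<close> is the only positive square root of \<open>x\<^sup>2\<close>. The positivity arguments behind this use
  the spectrum; that the norm of a hermitian element is its spectral radius follows from
  the Cauchy estimates for its resolvent, tested against the normal functionals of the
  predual.\<close>

lemma adj_zero [simp]: "adj (0::'a::cstar_algebra) = 0"
  using adj_scaleR[of 0 0] by simp

lemma adj_minus [simp]: "adj (- x) = - adj (x::'a::cstar_algebra)"
  using adj_scaleR[of "-1" x] by simp

lemma adj_diff [simp]: "adj (x - y) = adj x - adj (y::'a::cstar_algebra)"
  using adj_add[of x "-y"] by simp

lemma adj_one [simp]: "adj 1 = (1::'a::cstar_algebra)"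
  using adj_mult[of "adj 1" "1::'a"] by (simp add: adj_adj)

lemma adj_of_real [simp]: "adj (of_real r) = (of_real r::'a::cstar_algebra)"
  by (simp add: of_real_def adj_scaleR)

lemma norm_adj [simp]: "norm (adj x) = norm (x::'a::cstar_algebra)"
proof -
  have le: "norm y \<le> norm (adj y)" for y :: 'a
  proof (cases "y = 0")
    case False
    have "norm y * norm y = norm (adj y * y)" by (simp add: cstar_identity power2_eq_square)
    also have "\<dots> \<le> norm (adj y) * norm y" by (rule norm_mult_ineq)
    finally show ?thesis using False by simp
  qed simp
  show ?thesis using le[of x] le[of "adj x"] by (simp add: adj_adj)
qed

lemma bounded_linear_adj: "bounded_linear (adj::'a::cstar_algebra \<Rightarrow> 'a)"
  by (rule bounded_linear_intro[where K=1]) (auto simp: adj_add adj_scaleR)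

lemma adj_power: "adj (x ^ n) = adj (x::'a::cstar_algebra) ^ n"
proof (induct n)
  case (Suc n)
  have "adj (x ^ Suc n) = adj x ^ n * adj x" by (simp add: adj_mult Suc)
  then show ?case by (simp add: power_commutes)
qed simp

lemma adj_mult_self_eq_zero_iff [simp]: "adj x * x = 0 \<longleftrightarrow> x = (0::'a::cstar_algebra)"
proof
  assume "adj x * x = 0"
  then have "(norm x)\<^sup>2 = 0" using cstar_identity[of x] by simp
  then show "x = 0" by simp
qed simp

lemma norm_square_hermitian:
  fixes h :: "'a::cstar_algebra"
  assumes "adj h = h"
  shows "norm (h * h) = (norm h)\<^sup>2"
  using cstar_identity[of h] assms by simp

lemma norm_power_two_power_hermitian:
  fixes h :: "'a::cstar_algebra"
  assumes "adj h = h"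
  shows "norm (h ^ (2 ^ k)) = norm h ^ (2 ^ k)"
proof (induct k)
  case (Suc k)
  have "adj (h ^ (2 ^ k)) = h ^ (2 ^ k)" by (simp add: adj_power assms)
  then have "norm (h ^ (2 ^ k) * h ^ (2 ^ k)) = (norm (h ^ (2 ^ k)))\<^sup>2"
    by (rule norm_square_hermitian)
  moreover have "h ^ (2 ^ k) * h ^ (2 ^ k) = h ^ (2 ^ Suc k)"
    by (simp flip: power_add add: mult_2)
  ultimately show ?case using Suc by (simp add: power_mult[symmetric] mult.commute)
qed simp

definition of_complex :: "complex \<Rightarrow> 'a::cstar_algebra" where
  "of_complex z = Re z *\<^sub>R 1 + Im z *\<^sub>R iunit"

lemma of_complex_add: "of_complex (z + w) = of_complex z + (of_complex w::'a::cstar_algebra)"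
  by (simp add: of_complex_def scaleR_add_left)

lemma of_complex_mult: "of_complex (z * w) = of_complex z * (of_complex w::'a::cstar_algebra)"
  by (simp add: of_complex_def algebra_simps iunit_sq scaleR_add_left scaleR_diff_left)

lemma of_complex_commute: "of_complex z * x = x * (of_complex z::'a::cstar_algebra)"
  by (simp add: of_complex_def algebra_simps iunit_central)

lemma of_complex_0 [simp]: "of_complex 0 = (0::'a::cstar_algebra)"
  by (simp add: of_complex_def)

lemma of_complex_1 [simp]: "of_complex 1 = (1::'a::cstar_algebra)"
  by (simp add: of_complex_def)

lemma of_complex_minus: "of_complex (- z) = - (of_complex z::'a::cstar_algebra)"
  by (simp add: of_complex_def)

lemma of_complex_of_real: "of_complex (complex_of_real r) = (of_real r::'a::cstar_algebra)"
  by (simp add: of_complex_def of_real_def)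

lemma adj_of_complex: "adj (of_complex z) = (of_complex (cnj z)::'a::cstar_algebra)"
  by (simp add: of_complex_def adj_add adj_scaleR adj_iunit)

lemma norm_of_complex_mult: "norm (of_complex z * x) = cmod z * norm (x::'a::cstar_algebra)"
  using norm_complex_scale[of "Re z" "Im z" x] by (simp add: of_complex_def cmod_def)

lemma of_complex_mult_power: "(of_complex z * h) ^ n = of_complex (z ^ n) * (h::'a::cstar_algebra) ^ n"
proof (induct n)
  case (Suc n)
  have "(of_complex z * h) ^ Suc n = (of_complex z * h) * (of_complex (z ^ n) * h ^ n)"
    using Suc by simp
  also have "\<dots> = (of_complex z * of_complex (z ^ n)) * (h * h ^ n)"
    by (metis of_complex_commute mult.assoc)
  finally show ?case by (simp add: of_complex_mult[symmetric])
qed simp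

lemma of_complex_ii_real_square:
  "of_complex (\<i> * complex_of_real t) * of_complex (\<i> * complex_of_real t) = - (of_real (t\<^sup>2)::'a::cstar_algebra)"
proof -
  have "(\<i> * complex_of_real t) * (\<i> * complex_of_real t) = - complex_of_real (t\<^sup>2)"
    by (simp add: power2_eq_square algebra_simps)
  then show ?thesis by (simp only: of_complex_mult[symmetric] of_complex_minus of_complex_of_real)
qed

definition inverse_pair :: "'a::cstar_algebra \<Rightarrow> 'a \<Rightarrow> bool" where
  "inverse_pair x y \<longleftrightarrow> x * y = 1 \<and> y * x = 1"

definition has_inverse :: "'a::cstar_algebra \<Rightarrow> bool" where
  "has_inverse x \<longleftrightarrow> (\<exists>y. inverse_pair x y)"

definition the_inverse :: "'a::cstar_algebra \<Rightarrow> 'a" where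
  "the_inverse x = (THE y. inverse_pair x y)"

lemma inverse_pair_unique: "inverse_pair x y \<Longrightarrow> inverse_pair x y' \<Longrightarrow> y = y'"
  unfolding inverse_pair_def by (metis mult.assoc mult_1_left mult_1_right)

lemma inverse_pair_the_inverse: "has_inverse x \<Longrightarrow> inverse_pair x (the_inverse x)"
  unfolding the_inverse_def has_inverse_def using inverse_pair_unique by (metis theI)

lemma the_inverse_eq: "inverse_pair x y \<Longrightarrow> the_inverse x = y"
  using inverse_pair_the_inverse inverse_pair_unique has_inverse_def by blast

lemma has_inverse_mult: "has_inverse a \<Longrightarrow> has_inverse b \<Longrightarrow> has_inverse (a * b)"
  unfolding has_inverse_def inverse_pair_def by (metis mult.assoc mult_1_left)

lemma has_inverse_minus: "has_inverse x \<Longrightarrow> has_inverse (- x)"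
proof -
  assume "has_inverse x"
  then obtain y where "x * y = 1" "y * x = 1" by (auto simp: has_inverse_def inverse_pair_def)
  then have "inverse_pair (- x) (- y)" by (simp add: inverse_pair_def)
  then show ?thesis by (auto simp: has_inverse_def)
qed

lemma has_inverse_of_complex: "z \<noteq> 0 \<Longrightarrow> has_inverse (of_complex z :: 'a::cstar_algebra)"
  unfolding has_inverse_def inverse_pair_def
  by (rule exI[of _ "of_complex (1 / z)"]) (simp add: of_complex_mult[symmetric])

lemma has_inverse_one [simp]: "has_inverse (1::'a::cstar_algebra)"
  unfolding has_inverse_def inverse_pair_def by auto

lemma has_inverse_of_complex_mult_iff:
  "z \<noteq> 0 \<Longrightarrow> has_inverse (of_complex z * x) \<longleftrightarrow> has_inverse (x::'a::cstar_algebra)"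
proof
  assume z: "z \<noteq> 0" and "has_inverse (of_complex z * x)"
  moreover have "x = of_complex (1 / z) * (of_complex z * x)"
    using z by (simp add: mult.assoc[symmetric] of_complex_mult[symmetric])
  ultimately show "has_inverse x" using has_inverse_mult has_inverse_of_complex z
    by (metis divide_eq_0_iff one_neq_zero)
qed (use has_inverse_mult has_inverse_of_complex in blast)

lemma neumann_series:
  fixes e :: "'a::cstar_algebra"
  assumes "norm e < 1"
  shows "summable (\<lambda>n. e ^ n)" "(1 - e) * (\<Sum>n. e ^ n) = 1" "(\<Sum>n. e ^ n) * (1 - e) = 1"
    "norm (\<Sum>n. e ^ n) \<le> 1 / (1 - norm e)"
proof -
  have g: "summable (\<lambda>n. norm e ^ n)" using assms by (simp add: summable_geometric)
  have sn: "summable (\<lambda>n. norm (e ^ n))"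
    by (rule summable_comparison_test[OF _ g]) (auto intro: norm_power_ineq)
  then show s: "summable (\<lambda>n. e ^ n)" by (rule summable_norm_cancel)
  have h: "(\<Sum>n. e ^ n) = 1 + (\<Sum>n. e ^ Suc n)"
    using suminf_split_head[OF s] by simp
  have "(\<Sum>n. e ^ Suc n) = e * (\<Sum>n. e ^ n)"
    using suminf_mult[OF s, of e] by simp
  moreover have "(\<Sum>n. e ^ Suc n) = (\<Sum>n. e ^ n) * e"
    using suminf_mult2[OF s, of e] by (simp add: power_commutes)
  ultimately show "(1 - e) * (\<Sum>n. e ^ n) = 1" "(\<Sum>n. e ^ n) * (1 - e) = 1"
    using h by (simp_all add: algebra_simps)
  have "norm (\<Sum>n. e ^ n) \<le> (\<Sum>n. norm (e ^ n))" by (rule summable_norm[OF sn])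
  also have "\<dots> \<le> (\<Sum>n. norm e ^ n)"
    by (rule suminf_le[OF _ sn g]) (auto intro: norm_power_ineq)
  also have "\<dots> = 1 / (1 - norm e)" using assms by (simp add: suminf_geometric)
  finally show "norm (\<Sum>n. e ^ n) \<le> 1 / (1 - norm e)" .
qed

lemma the_inverse_one_minus:
  fixes e :: "'a::cstar_algebra"
  assumes "norm e < 1"
  shows "the_inverse (1 - e) = (\<Sum>n. e ^ n)"
  using neumann_series(2,3)[OF assms] by (intro the_inverse_eq) (simp add: inverse_pair_def)

lemma has_inverse_of_complex_minus:
  fixes x :: "'a::cstar_algebra"
  assumes "norm x < cmod l"
  shows "has_inverse (of_complex l - x)"
proof -
  have l: "l \<noteq> 0" using assms by auto
  have "norm (of_complex (1 / l) * x) < 1"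
    using assms l by (simp add: norm_of_complex_mult norm_divide field_simps)
  then have inv: "has_inverse (1 - of_complex (1 / l) * x)"
    using neumann_series(2,3) unfolding has_inverse_def inverse_pair_def by blast
  have "of_complex l - x = of_complex l * (1 - of_complex (1 / l) * x)"
    using l by (simp add: right_diff_distrib mult.assoc[symmetric] of_complex_mult[symmetric])
  then show ?thesis using inv by (simp only: has_inverse_of_complex_mult_iff[OF l])
qed

lemma has_inverse_of_real_minus:
  fixes x :: "'a::cstar_algebra"
  assumes "norm x < c"
  shows "has_inverse (of_real c - x)"
proof -
  have "norm x < cmod (complex_of_real c)" using assms by simp
  from has_inverse_of_complex_minus[OF this] show ?thesis by (simp only: of_complex_of_real)
qed

lemma has_inverse_one_minus_mult_commute:
  fixes a b :: "'a::cstar_algebra"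
  assumes "has_inverse (1 - a * b)"
  shows "has_inverse (1 - b * a)"
proof -
  obtain u where u: "(1 - a * b) * u = 1" "u * (1 - a * b) = 1"
    using assms by (auto simp: has_inverse_def inverse_pair_def)
  have "(1 - b * a) * (1 + b * u * a) = 1 - b * a + b * ((1 - a * b) * u) * a"
    by (simp add: algebra_simps)
  moreover have "(1 + b * u * a) * (1 - b * a) = 1 - b * a + b * (u * (1 - a * b)) * a"
    by (simp add: algebra_simps)
  ultimately show ?thesis using u unfolding has_inverse_def inverse_pair_def by auto
qed

lemma has_inverse_of_complex_minus_mult_commute:
  fixes a b :: "'a::cstar_algebra"
  assumes inv: "has_inverse (of_complex l - a * b)" and l: "l \<noteq> 0"
  shows "has_inverse (of_complex l - b * a)"
proof -
  have scale: "of_complex l - y * x = of_complex l * (1 - (of_complex (1 / l) * y) * x)"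
    for x y :: 'a
    using l by (simp add: right_diff_distrib mult.assoc[symmetric] of_complex_mult[symmetric])
  have "b * (of_complex (1 / l) * a) = (of_complex (1 / l) * b) * a"
    by (metis of_complex_commute mult.assoc)
  then show ?thesis
    using inv has_inverse_one_minus_mult_commute[of "of_complex (1 / l) * a" b]
    by (simp only: scale has_inverse_of_complex_mult_iff[OF l])
qed

text \<open>If \<open>l\<close> is a spectral value of \<open>h\<close>, then \<open>l + i t\<close> is one of \<open>h + i t\<close>, and the
  C*-identity gives \<open>(Im l + t)\<^sup>2 \<le> \<parallel>h\<parallel>\<^sup>2 + t\<^sup>2\<close> for all real \<open>t\<close>; this fails for large \<open>t\<close>
  unless \<open>Im l = 0\<close>.\<close>

lemma has_inverse_of_complex_minus_hermitian:
  fixes h :: "'a::cstar_algebra"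
  assumes h: "adj h = h" and im: "Im l \<noteq> 0"
  shows "has_inverse (of_complex l - h)"
proof (rule ccontr)
  assume not_inv: "\<not> has_inverse (of_complex l - h)"
  have key: "(Im l + t)\<^sup>2 \<le> (norm h)\<^sup>2 + t\<^sup>2" for t
  proof -
    define c :: 'a where "c = of_complex (\<i> * complex_of_real t)"
    have "of_complex (l + \<i> * complex_of_real t) - (h + c) = of_complex l - h"
      by (simp add: c_def of_complex_add)
    then have le: "cmod (l + \<i> * complex_of_real t) \<le> norm (h + c)"
      using has_inverse_of_complex_minus[of "h + c" "l + \<i> * complex_of_real t"] not_inv
      by (metis not_le)
    have "(Im l + t)\<^sup>2 \<le> (cmod (l + \<i> * complex_of_real t))\<^sup>2" by (simp add: cmod_def)
    also have "\<dots> \<le> (norm (h + c))\<^sup>2" using le by (simp add: power_mono)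
    also have "\<dots> = norm (adj (h + c) * (h + c))" by (simp add: cstar_identity)
    also have "adj (h + c) * (h + c) = h * h + of_real (t\<^sup>2)"
    proof -
      have "adj (h + c) = h - c"
        unfolding c_def by (simp add: adj_add adj_of_complex h of_complex_minus)
      then have "adj (h + c) * (h + c) = (h - c) * (h + c)" by (simp only:)
      also have "\<dots> = h * h + (h * c - c * h) - c * c" by (simp add: algebra_simps)
      finally have "adj (h + c) * (h + c) = h * h + (h * c - c * h) - c * c" .
      moreover have "c * h = h * c" unfolding c_def by (rule of_complex_commute)
      moreover have "c * c = - of_real (t\<^sup>2)" unfolding c_def by (rule of_complex_ii_real_square)
      ultimately show ?thesis by simp
    qed
    also have "norm (h * h + of_real (t\<^sup>2)) \<le> norm (h * h) + norm (of_real (t\<^sup>2) :: 'a)"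
      by (rule norm_triangle_ineq)
    also have "\<dots> \<le> (norm h)\<^sup>2 + t\<^sup>2"
      using norm_mult_ineq[of h h] by (simp only: norm_of_real) (simp add: power2_eq_square)
    finally show ?thesis .
  qed
  define t where "t = ((norm h)\<^sup>2 + 1) / (2 * Im l)"
  have "2 * t * Im l = (norm h)\<^sup>2 + 1" using im unfolding t_def by simp
  moreover have "(Im l + t)\<^sup>2 = (Im l)\<^sup>2 + 2 * t * Im l + t\<^sup>2"
    by (simp add: power2_eq_square algebra_simps)
  ultimately show False using key[of t] by (smt (verit) zero_le_power2)
qed

lemma norm_mult3_ineq: "norm (a * b * c) \<le> norm a * norm b * norm (c::'a::real_normed_algebra)"
  by (metis mult_right_mono norm_ge_zero norm_mult_ineq order_trans)

lemma norm_mult4_ineq: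
  "norm (a * b * c * d) \<le> norm a * norm b * norm c * norm (d::'a::real_normed_algebra)"
  by (metis mult_right_mono norm_ge_zero norm_mult_ineq norm_mult3_ineq order_trans)

text \<open>With \<open>y = (1 - e)\<^sup>-\<^sup>1 y\<^sub>0\<close> for \<open>e = - y\<^sub>0 d\<close>, both error terms are tails of the
  Neumann series of \<open>e\<close>.\<close>

lemma inverse_perturbation:
  fixes x0 y0 d :: "'a::cstar_algebra"
  assumes inv: "inverse_pair x0 y0" and small: "norm d * norm y0 < 1"
  shows "\<exists>y. inverse_pair (x0 + d) y \<and>
     norm (y - y0) \<le> norm d * (norm y0)\<^sup>2 / (1 - norm d * norm y0) \<and>
     norm (y - y0 + y0 * d * y0) \<le> (norm d)\<^sup>2 * (norm y0) ^ 3 / (1 - norm d * norm y0)"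
proof -
  define e where "e = - (y0 * d)"
  have ne: "norm e \<le> norm d * norm y0"
    unfolding e_def using norm_mult_ineq[of y0 d] by (simp add: mult.commute)
  then have ne1: "norm e < 1" using small by simp
  define N where "N = (\<Sum>n. e ^ n)"
  note N = neumann_series[OF ne1, folded N_def]
  have x0y0: "x0 * y0 = 1" "y0 * x0 = 1" using inv by (auto simp: inverse_pair_def)
  have dec: "x0 + d = x0 * (1 - e)"
    unfolding e_def by (simp add: distrib_left mult.assoc[symmetric] x0y0)
  define y where "y = N * y0"
  have "(x0 + d) * y = x0 * ((1 - e) * N) * y0" unfolding dec y_def by (simp only: mult.assoc)
  moreover have "y * (x0 + d) = N * (y0 * x0) * (1 - e)" unfolding dec y_def by (simp only: mult.assoc)
  ultimately have inv_y: "inverse_pair (x0 + d) y" using N(2,3) x0y0 by (simp add: inverse_pair_def)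
  have N1: "N = 1 + e * N" using N(2) by (simp add: algebra_simps)
  then have N2: "N = 1 + e + e * e * N" by (metis distrib_left mult.assoc mult.right_neutral add.assoc)
  have "1 / (1 - norm e) \<le> 1 / (1 - norm d * norm y0)"
    using ne small ne1 by (intro divide_left_mono) auto
  then have nN: "norm N \<le> 1 / (1 - norm d * norm y0)" using N(4) by linarith
  have "y - y0 = e * N * y0" unfolding y_def by (subst N1) (simp add: distrib_right)
  then have "norm (y - y0) \<le> norm e * norm N * norm y0" by (simp only: norm_mult3_ineq)
  also have "\<dots> \<le> (norm d * norm y0) * (1 / (1 - norm d * norm y0)) * norm y0"
    by (intro mult_right_mono mult_mono ne nN) auto
  finally have b1: "norm (y - y0) \<le> norm d * (norm y0)\<^sup>2 / (1 - norm d * norm y0)"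
    by (simp add: power2_eq_square)
  have "y - y0 + y0 * d * y0 = e * y0 + y0 * d * y0 + e * e * N * y0"
    unfolding y_def by (subst N2) (simp add: distrib_right)
  also have "e * y0 + y0 * d * y0 = 0" unfolding e_def by simp
  finally have "y - y0 + y0 * d * y0 = e * e * N * y0" by simp
  then have "norm (y - y0 + y0 * d * y0) \<le> norm e * norm e * norm N * norm y0"
    by (simp only: norm_mult4_ineq)
  also have "\<dots> \<le> (norm d * norm y0) * (norm d * norm y0) * (1 / (1 - norm d * norm y0)) * norm y0"
    by (intro mult_right_mono mult_mono ne nN) auto
  finally have b2: "norm (y - y0 + y0 * d * y0) \<le> (norm d)\<^sup>2 * (norm y0) ^ 3 / (1 - norm d * norm y0)"
    by (simp add: power2_eq_square power3_eq_cube algebra_simps)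
  show ?thesis using inv_y b1 b2 by blast
qed

text \<open>\<open>resolvent h m = (1 - m h)\<^sup>-\<^sup>1\<close>, the resolvent of \<open>h\<close> at \<open>1/m\<close> up to the factor \<open>1/m\<close>;
  the coefficients of its power series in \<open>m\<close> are the powers of \<open>h\<close>.\<close>

definition resolvent :: "'a::cstar_algebra \<Rightarrow> complex \<Rightarrow> 'a" where
  "resolvent h m = the_inverse (1 - of_complex m * h)"

lemma resolvent_perturbation:
  fixes h :: "'a::cstar_algebra"
  assumes inv: "has_inverse (1 - of_complex m * h)"
    and small: "cmod d * norm h * norm (resolvent h m) < 1"
  shows "has_inverse (1 - of_complex (m + d) * h)"
    "norm (resolvent h (m + d) - resolvent h m)
       \<le> cmod d * norm h * (norm (resolvent h m))\<^sup>2 / (1 - cmod d * norm h * norm (resolvent h m))"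
    "norm (resolvent h (m + d) - resolvent h m - of_complex d * (resolvent h m * h * resolvent h m))
       \<le> (cmod d * norm h)\<^sup>2 * norm (resolvent h m) ^ 3 / (1 - cmod d * norm h * norm (resolvent h m))"
proof -
  let ?R = "resolvent h m"
  have nd: "norm (- (of_complex d * h)) = cmod d * norm h" by (simp add: norm_of_complex_mult)
  have "norm (- (of_complex d * h)) * norm ?R < 1" using small nd by simp
  from inverse_perturbation[OF inverse_pair_the_inverse[OF inv] this[unfolded resolvent_def]]
  obtain y where y: "inverse_pair (1 - of_complex m * h + - (of_complex d * h)) y"
    "norm (y - ?R) \<le> norm (- (of_complex d * h)) * (norm ?R)\<^sup>2 / (1 - norm (- (of_complex d * h)) * norm ?R)"
    "norm (y - ?R + ?R * - (of_complex d * h) * ?R)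
       \<le> (norm (- (of_complex d * h)))\<^sup>2 * norm ?R ^ 3 / (1 - norm (- (of_complex d * h)) * norm ?R)"
    unfolding resolvent_def by blast
  have e: "1 - of_complex m * h + - (of_complex d * h) = 1 - of_complex (m + d) * h"
    by (simp add: of_complex_add algebra_simps)
  have R: "resolvent h (m + d) = y" using y(1) e the_inverse_eq unfolding resolvent_def by metis
  show "has_inverse (1 - of_complex (m + d) * h)" using y(1) e unfolding has_inverse_def by metis
  show "norm (resolvent h (m + d) - ?R)
      \<le> cmod d * norm h * (norm ?R)\<^sup>2 / (1 - cmod d * norm h * norm ?R)"
    using y(2) nd R by simp
  have "?R * (of_complex d * h) * ?R = of_complex d * (?R * h * ?R)"
    by (metis of_complex_commute mult.assoc)
  then show "norm (resolvent h (m + d) - ?R - of_complex d * (?R * h * ?R))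
      \<le> (cmod d * norm h)\<^sup>2 * norm ?R ^ 3 / (1 - cmod d * norm h * norm ?R)"
    using y(3) nd R by simp
qed

lemma eventually_at_small_increment:
  "\<forall>\<^sub>F x in at (m::complex). cmod (x - m) * c < 1"
proof -
  have "((\<lambda>x. cmod (x - m) * c) \<longlongrightarrow> cmod (m - m) * c) (at m)" by (intro tendsto_intros)
  then show ?thesis by (rule order_tendstoD) simp
qed

lemma open_resolvent_domain:
  fixes h :: "'a::cstar_algebra"
  shows "open {m. has_inverse (1 - of_complex m * h)}"
proof (rule openI)
  fix m assume "m \<in> {m. has_inverse (1 - of_complex m * h)}"
  then have inv: "has_inverse (1 - of_complex m * h)" by simp
  define r where "r = 1 / (norm h * norm (resolvent h m) + 1)"
  have r: "0 < r" unfolding r_def by (simp add: add_nonneg_pos)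
  have "ball m r \<subseteq> {m. has_inverse (1 - of_complex m * h)}"
  proof
    fix x assume "x \<in> ball m r"
    then have "cmod (x - m) < r" by (simp add: dist_norm norm_minus_commute)
    then have "cmod (x - m) * (norm h * norm (resolvent h m) + 1) < 1"
      unfolding r_def by (simp add: less_divide_eq add_nonneg_pos)
    moreover have "cmod (x - m) * (norm h * norm (resolvent h m))
        \<le> cmod (x - m) * (norm h * norm (resolvent h m) + 1)"
      by (simp add: mult_left_mono)
    ultimately have "cmod (x - m) * (norm h * norm (resolvent h m)) < 1" by linarith
    from resolvent_perturbation(1)[OF inv, of "x - m"] this show "x \<in> {m. has_inverse (1 - of_complex m * h)}"
      by (simp add: mult.assoc)
  qed
  then show "\<exists>e>0. ball m e \<subseteq> {m. has_inverse (1 - of_complex m * h)}" using r by blast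
qed

lemma isCont_resolvent:
  fixes h :: "'a::cstar_algebra"
  assumes inv: "has_inverse (1 - of_complex m * h)"
  shows "isCont (resolvent h) m"
proof -
  let ?c = "norm h * norm (resolvent h m)"
  let ?g = "\<lambda>x. cmod (x - m) * norm h * (norm (resolvent h m))\<^sup>2 / (1 - cmod (x - m) * ?c)"
  have "\<forall>\<^sub>F x in at m. norm (resolvent h x - resolvent h m) \<le> ?g x"
    using eventually_at_small_increment[of m ?c]
  proof eventually_elim
    case (elim x)
    then show ?case using resolvent_perturbation(2)[OF inv, of "x - m"] by (simp add: mult.assoc)
  qed
  moreover have "(?g \<longlongrightarrow> cmod (m - m) * norm h * (norm (resolvent h m))\<^sup>2 / (1 - cmod (m - m) * ?c)) (at m)"
    by (intro tendsto_intros) simp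
  then have "(?g \<longlongrightarrow> 0) (at m)" by simp
  ultimately have "((\<lambda>x. resolvent h x - resolvent h m) \<longlongrightarrow> 0) (at m)"
    by (rule Lim_null_comparison)
  then show ?thesis unfolding isCont_def by (rule LIM_zero_cancel)
qed

lemma bounded_clinear_fun_imp_bounded_linear:
  assumes "bounded_clinear_fun f"
  shows "bounded_linear f"
proof -
  from assms obtain K where K: "\<And>x. cmod (f x) \<le> K * norm x" and l: "clinear_fun f"
    unfolding bounded_clinear_fun_def by auto
  show ?thesis
  proof (rule bounded_linear_intro[where K=K])
    show "f (x + y) = f x + f y" for x y using l by (simp add: clinear_fun_def)
    show "f (r *\<^sub>R x) = r *\<^sub>R f x" for r x using l by (simp add: clinear_fun_def scaleR_conv_of_real)
    show "norm (f x) \<le> norm x * K" for x using K[of x] by (simp add: mult.commute)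
  qed
qed

lemma bounded_clinear_fun_of_complex_mult:
  assumes "bounded_clinear_fun f"
  shows "f (of_complex z * x) = z * f x"
proof -
  have l: "clinear_fun f" using assms by (simp add: bounded_clinear_fun_def)
  have "of_complex z * x = Re z *\<^sub>R x + Im z *\<^sub>R (iunit * x)"
    by (simp add: of_complex_def algebra_simps)
  then have "f (of_complex z * x) = (complex_of_real (Re z) + \<i> * complex_of_real (Im z)) * f x"
    using l by (simp add: clinear_fun_def distrib_right mult.assoc)
  then show ?thesis by (simp add: complex_eq[symmetric])
qed

lemma has_field_derivative_functional_resolvent:
  fixes h :: "'a::cstar_algebra"
  assumes inv: "has_inverse (1 - of_complex m * h)" and f: "bounded_clinear_fun f"
  shows "((\<lambda>m. f (resolvent h m)) has_field_derivative
           f (resolvent h m * h * resolvent h m)) (at m)"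
proof -
  have bl: "bounded_linear f" using f by (rule bounded_clinear_fun_imp_bounded_linear)
  let ?R = "resolvent h m"
  let ?D = "f (?R * h * ?R)"
  let ?c = "norm h * norm ?R"
  let ?g = "\<lambda>x. onorm f * (cmod (x - m) * (norm h)\<^sup>2 * norm ?R ^ 3 / (1 - cmod (x - m) * ?c))"
  have "\<forall>\<^sub>F x in at m. x \<noteq> m" by (simp add: eventually_at_filter)
  then have "\<forall>\<^sub>F x in at m. norm ((f (resolvent h x) - f ?R) / (x - m) - ?D) \<le> ?g x"
    using eventually_at_small_increment[of m ?c]
  proof eventually_elim
    case (elim x)
    let ?d = "x - m"
    let ?E = "resolvent h x - ?R - of_complex ?d * (?R * h * ?R)"
    have d: "cmod ?d \<noteq> 0" and q: "1 - cmod ?d * ?c \<noteq> 0" using elim by auto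
    have E: "norm ?E \<le> (cmod ?d * norm h)\<^sup>2 * norm ?R ^ 3 / (1 - cmod ?d * ?c)"
      using resolvent_perturbation(3)[OF inv, of ?d] elim by (simp add: mult.assoc)
    have "f ?E = f (resolvent h x) - f ?R - ?d * ?D"
      by (simp only: linear_diff[OF bounded_linear.linear[OF bl]] bounded_clinear_fun_of_complex_mult[OF f])
    then have "(f (resolvent h x) - f ?R) / ?d - ?D = f ?E / ?d"
      using d by (simp add: field_simps)
    then have "norm ((f (resolvent h x) - f ?R) / ?d - ?D) = norm (f ?E) / cmod ?d"
      by (simp add: norm_divide)
    also have "\<dots> \<le> onorm f * norm ?E / cmod ?d"
      by (intro divide_right_mono onorm[OF bl]) auto
    also have "\<dots> \<le> onorm f * ((cmod ?d * norm h)\<^sup>2 * norm ?R ^ 3 / (1 - cmod ?d * ?c)) / cmod ?d"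
      by (intro divide_right_mono mult_left_mono E onorm_pos_le[OF bl]) auto
    also have "\<dots> = ?g x" using q d by (simp add: power2_eq_square field_simps)
    finally show ?case .
  qed
  moreover have "(?g \<longlongrightarrow> onorm f * (cmod (m - m) * (norm h)\<^sup>2 * norm ?R ^ 3 / (1 - cmod (m - m) * ?c))) (at m)"
    by (intro tendsto_intros) simp
  then have "(?g \<longlongrightarrow> 0) (at m)" by simp
  ultimately have "((\<lambda>x. (f (resolvent h x) - f ?R) / (x - m) - ?D) \<longlongrightarrow> 0) (at m)"
    by (rule Lim_null_comparison)
  then show ?thesis by (simp add: has_field_derivative_iff LIM_zero_cancel)
qed

lemma fps_conv_radius_functional_powers_pos:
  fixes h :: "'a::cstar_algebra" and f :: "'a \<Rightarrow> complex"
  assumes bl: "bounded_linear f"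
  shows "0 < fps_conv_radius (Abs_fps (\<lambda>n. f (h ^ n)))"
proof -
  define c where "c = 1 / (2 * (norm h + 1))"
  have c0: "0 < c" unfolding c_def by (simp add: add_nonneg_pos)
  have "0 < 2 * (norm h + 1)" by (simp add: add_nonneg_pos)
  then have hc: "norm h * c \<le> 1 / 2" unfolding c_def by (simp add: field_simps)
  have "norm (norm (f (h ^ n) * complex_of_real c ^ n)) \<le> onorm f * (1/2) ^ n" for n
  proof -
    have "norm (norm (f (h ^ n) * complex_of_real c ^ n)) = cmod (f (h ^ n)) * c ^ n"
      using c0 by (simp add: norm_mult norm_power)
    also have "\<dots> \<le> onorm f * norm h ^ n * c ^ n"
      using onorm[OF bl, of "h ^ n"] norm_power_ineq[of h n] onorm_pos_le[OF bl] c0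
      by (meson mult_left_mono mult_right_mono order_trans zero_le_power less_imp_le)
    also have "\<dots> \<le> onorm f * (1/2) ^ n"
      using hc c0 onorm_pos_le[OF bl]
      by (simp add: mult.assoc power_mult_distrib[symmetric] mult_left_mono power_mono)
    finally show ?thesis .
  qed
  then have "summable (\<lambda>n. norm (f (h ^ n) * complex_of_real c ^ n))"
    by (intro summable_comparison_test[OF _ summable_mult[OF summable_geometric[of "1/2::real"]]])
      auto
  then have "summable (\<lambda>n. f (h ^ n) * complex_of_real c ^ n)" by (rule summable_norm_cancel)
  then have "ereal c \<le> conv_radius (\<lambda>n. f (h ^ n))"
    using conv_radius_geI[of "\<lambda>n. f (h ^ n)" "complex_of_real c"] c0 by simp
  then show ?thesis
    unfolding fps_conv_radius_def using c0 by (simp add: less_le_trans[of 0 "ereal c"])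
qed

lemma functional_resolvent_has_fps_expansion:
  fixes h :: "'a::cstar_algebra"
  assumes f: "bounded_clinear_fun f"
  shows "(\<lambda>m. f (resolvent h m)) has_fps_expansion Abs_fps (\<lambda>n. f (h ^ n))"
  unfolding has_fps_expansion_def
proof
  have bl: "bounded_linear f" using f by (rule bounded_clinear_fun_imp_bounded_linear)
  then show "0 < fps_conv_radius (Abs_fps (\<lambda>n. f (h ^ n)))"
    by (rule fps_conv_radius_functional_powers_pos)
  show "\<forall>\<^sub>F z in nhds 0. eval_fps (Abs_fps (\<lambda>n. f (h ^ n))) z = f (resolvent h z)"
    unfolding eventually_nhds
  proof (intro exI conjI ballI)
    show "open (ball (0::complex) (1 / (norm h + 1)))" "(0::complex) \<in> ball 0 (1 / (norm h + 1))"
      by (simp_all add: add_nonneg_pos)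
    fix z :: complex assume "z \<in> ball 0 (1 / (norm h + 1))"
    then have "cmod z * (norm h + 1) < 1" by (simp add: less_divide_eq add_nonneg_pos)
    moreover have "cmod z * norm h \<le> cmod z * (norm h + 1)" by (simp add: mult_left_mono)
    ultimately have small: "norm (of_complex z * h) < 1" by (simp add: norm_of_complex_mult)
    have "f (resolvent h z) = (\<Sum>n. f ((of_complex z * h) ^ n))"
      unfolding resolvent_def the_inverse_one_minus[OF small]
      using bounded_linear.suminf[OF bl neumann_series(1)[OF small]] by simp
    also have "\<dots> = (\<Sum>n. f (h ^ n) * z ^ n)"
      by (simp add: of_complex_mult_power bounded_clinear_fun_of_complex_mult[OF f] mult.commute)
    finally show "eval_fps (Abs_fps (\<lambda>n. f (h ^ n))) z = f (resolvent h z)"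
      by (simp add: eval_fps_def)
  qed
qed

text \<open>The Cauchy estimates for the power series of \<open>f \<circ> resolvent h\<close> on the circle of
  radius \<open>s\<close>.\<close>

lemma functional_power_bound:
  fixes h :: "'a::cstar_algebra"
  assumes f: "bounded_clinear_fun f" and f1: "onorm f \<le> 1" and s: "0 < s"
    and inv: "\<And>m. m \<in> cball 0 s \<Longrightarrow> has_inverse (1 - of_complex m * h)"
    and M: "\<And>m. m \<in> sphere 0 s \<Longrightarrow> norm (resolvent h m) \<le> M"
  shows "cmod (f (h ^ n)) \<le> M / s ^ n"
proof -
  have bl: "bounded_linear f" using f by (rule bounded_clinear_fun_imp_bounded_linear)
  let ?F = "\<lambda>m. f (resolvent h m)"
  let ?U = "{m. has_inverse (1 - of_complex m * h)}"
  have "?F holomorphic_on ?U"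
    using has_field_derivative_functional_resolvent[OF _ f] open_resolvent_domain[of h]
    unfolding holomorphic_on_def field_differentiable_def
    by (meson has_field_derivative_at_within mem_Collect_eq)
  moreover have U: "cball 0 s \<subseteq> ?U" using inv by blast
  ultimately have holo: "?F holomorphic_on cball 0 s" by (rule holomorphic_on_subset)
  have "fps_nth (Abs_fps (\<lambda>n. f (h ^ n))) n = (deriv ^^ n) ?F 0 / fact n"
    by (rule fps_nth_fps_expansion[OF functional_resolvent_has_fps_expansion[OF f]])
  then have "cmod (f (h ^ n)) = norm ((deriv ^^ n) ?F 0) / fact n" by (simp add: norm_divide)
  moreover have "norm ((deriv ^^ n) ?F 0) \<le> fact n * M / s ^ n"
  proof (rule Cauchy_inequality)
    show "?F holomorphic_on ball 0 s"
      using holo ball_subset_cball by (rule holomorphic_on_subset)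
    show "continuous_on (cball 0 s) ?F"
      using holo by (rule holomorphic_on_imp_continuous_on)
    fix x :: complex assume "norm (0 - x) = s"
    then have "norm (resolvent h x) \<le> M" by (intro M) simp
    then have "onorm f * norm (resolvent h x) \<le> 1 * M"
      using f1 by (intro mult_mono) auto
    then show "norm (?F x) \<le> M" using onorm[OF bl, of "resolvent h x"] by simp
  qed (rule s)
  then have "norm ((deriv ^^ n) ?F 0) / fact n \<le> fact n * M / s ^ n / fact n"
    by (rule divide_right_mono) simp
  ultimately show ?thesis by simp
qed

lemma predual_imp_bounded_clinear_fun: "is_predual V \<Longrightarrow> f \<in> V \<Longrightarrow> bounded_clinear_fun f"
  by (auto simp: is_predual_def)

lemma predual_norm_le:
  fixes x :: "'a::cstar_algebra"
  assumes V: "is_predual V" and bound: "\<And>f. f \<in> V \<Longrightarrow> onorm f \<le> 1 \<Longrightarrow> cmod (f x) \<le> C"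
  shows "norm x \<le> C"
proof -
  have "norm x = (SUP f\<in>{f\<in>V. onorm f \<le> 1}. cmod (f x))" using V by (simp add: is_predual_def)
  moreover have "(\<lambda>x. 0) \<in> {f\<in>V. onorm f \<le> 1}" using V by (simp add: is_predual_def onorm_zero)
  ultimately show ?thesis using bound by (auto intro: cSUP_least)
qed

text \<open>The predual supplies enough
  bounded functionals to turn the Cauchy estimates into \<open>\<parallel>h\<^sup>n\<parallel> \<le> M / s\<^sup>n\<close>, and
  \<open>\<parallel>h\<^sup>2\<^sup>^\<^sup>k\<parallel> = \<parallel>h\<parallel>\<^sup>2\<^sup>^\<^sup>k\<close> then forces \<open>\<parallel>h\<parallel> \<le> 1/s\<close> for every \<open>1/s > \<rho>\<close>.\<close>

lemma norm_hermitian_le_spectral_bound: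
  fixes h :: "'a::cstar_algebra"
  assumes vN: "von_neumann_algebra TYPE('a)" and h: "adj h = h" and \<rho>: "0 \<le> \<rho>"
    and inv: "\<And>l. \<rho> < cmod l \<Longrightarrow> has_inverse (of_complex l - h)"
  shows "norm h \<le> \<rho>"
proof (rule ccontr)
  assume "\<not> norm h \<le> \<rho>"
  then have hp: "0 < norm h + \<rho>" and hr: "\<rho> < norm h" using \<rho> by auto
  obtain V :: "('a \<Rightarrow> complex) set" where V: "is_predual V"
    using vN unfolding von_neumann_algebra_def by auto
  define s where "s = 2 / (norm h + \<rho>)"
  have s: "0 < s" using hp unfolding s_def by simp
  have sh: "1 < s * norm h" and s\<rho>: "s * \<rho> < 1"
    using hr hp unfolding s_def by (simp_all add: field_simps)
  have inv_ball: "has_inverse (1 - of_complex m * h)" if "m \<in> cball 0 s" for m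
  proof (cases "m = 0")
    case False
    have "cmod m * \<rho> \<le> s * \<rho>" using that \<rho> by (simp add: mult_right_mono)
    then have "\<rho> < cmod (1 / m)" using s\<rho> False by (simp add: norm_divide field_simps)
    then have "has_inverse (of_complex (1 / m) - h)" by (rule inv)
    moreover have "1 - of_complex m * h = of_complex m * (of_complex (1 / m) - h)"
      using False by (simp add: right_diff_distrib mult.assoc[symmetric] of_complex_mult[symmetric])
    ultimately show ?thesis by (simp only: has_inverse_of_complex_mult_iff[OF False])
  qed simp
  have "compact (resolvent h ` sphere 0 s)"
    by (intro compact_continuous_image continuous_at_imp_continuous_on ballI isCont_resolvent
        inv_ball) auto
  then obtain M where M: "\<And>m. m \<in> sphere 0 s \<Longrightarrow> norm (resolvent h m) \<le> M"
    by (meson bounded_iff compact_imp_bounded imageI)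
  have "(s * norm h) ^ (2 ^ k) \<le> M" for k
  proof -
    have "norm (h ^ (2 ^ k)) \<le> M / s ^ (2 ^ k)"
      using predual_imp_bounded_clinear_fun[OF V]
      by (intro predual_norm_le[OF V] functional_power_bound[OF _ _ s inv_ball M])
    then show ?thesis using s by (simp add: norm_power_two_power_hermitian[OF h] power_mult_distrib field_simps)
  qed
  moreover obtain k where "M < (s * norm h) ^ k" using real_arch_pow[OF sh] by blast
  moreover have "(s * norm h) ^ k \<le> (s * norm h) ^ (2 ^ k)"
    using sh less_exp[of k] by (intro power_increasing) auto
  ultimately show False by (meson leD order_trans)
qed

lemma complex_real_or_nonreal:
  obtains (nonreal) "Im l \<noteq> 0" | (real) a where "l = complex_of_real a"
  by (metis complex_is_Real_iff Reals_cases)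

lemma norm_hermitian_le_real_spectral_bound:
  fixes h :: "'a::cstar_algebra"
  assumes vN: "von_neumann_algebra TYPE('a)" and h: "adj h = h" and \<rho>: "0 \<le> \<rho>"
    and inv: "\<And>a. \<rho> < \<bar>a\<bar> \<Longrightarrow> has_inverse (of_real a - h)"
  shows "norm h \<le> \<rho>"
proof (rule norm_hermitian_le_spectral_bound[OF vN h \<rho>])
  fix l assume l: "\<rho> < cmod l"
  show "has_inverse (of_complex l - h)"
  proof (cases l rule: complex_real_or_nonreal)
    case nonreal
    then show ?thesis by (rule has_inverse_of_complex_minus_hermitian[OF h])
  next
    case (real a)
    then show ?thesis using inv[of a] l by (simp add: of_complex_of_real)
  qed
qed

lemma has_inverse_of_real_plus:
  fixes x :: "'a::cstar_algebra"
  assumes "norm x < - c"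
  shows "has_inverse (of_real c + x)"
  using has_inverse_minus[OF has_inverse_of_real_minus[OF assms]] by (simp add: add.commute)

lemma has_inverse_of_real_plus_square:
  fixes h :: "'a::cstar_algebra"
  assumes h: "adj h = h" and c: "0 < c"
  shows "has_inverse (of_real c + h * h)"
proof -
  define j :: 'a where "j = of_complex (\<i> * complex_of_real (sqrt c))"
  have jj: "j * j = - of_real c" using of_complex_ii_real_square[of "sqrt c"] c by (simp add: j_def)
  have jh: "j * h = h * j" unfolding j_def by (rule of_complex_commute)
  have "(h + j) * (h - j) = h * h + (j * h - h * j) - j * j" by (simp add: algebra_simps)
  then have "(h + j) * (h - j) = of_real c + h * h" by (simp add: jj jh)
  moreover have "has_inverse (h + j)"
    using has_inverse_minus[OF has_inverse_of_complex_minus_hermitian[OF h, of "- (\<i> * complex_of_real (sqrt c))"]] c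
    by (simp add: j_def of_complex_minus)
  moreover have "has_inverse (h - j)"
    using has_inverse_minus[OF has_inverse_of_complex_minus_hermitian[OF h, of "\<i> * complex_of_real (sqrt c)"]] c
    by (simp add: j_def)
  ultimately show ?thesis by (metis has_inverse_mult)
qed

text \<open>Norm characterisation of positivity: \<open>x\<close> is hermitian with spectrum in \<open>[0, 2 r]\<close>.\<close>

definition positive_elem :: "'a::cstar_algebra \<Rightarrow> bool" where
  "positive_elem x \<longleftrightarrow> adj x = x \<and> (\<exists>r\<ge>0. norm (of_real r - x) \<le> r)"

lemma has_inverse_of_real_plus_positive:
  fixes x :: "'a::cstar_algebra"
  assumes x: "positive_elem x" and t: "0 < t"
  shows "has_inverse (of_real t + x)"
proof -
  obtain r where r: "r \<ge> 0" "norm (of_real r - x) \<le> r" using x by (auto simp: positive_elem_def)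
  then have "norm (of_real r - x) < t + r" using t by linarith
  then have "has_inverse (of_real (t + r) - (of_real r - x))" by (rule has_inverse_of_real_minus)
  then show ?thesis by (simp add: algebra_simps)
qed

lemma norm_of_real_minus_positive:
  fixes x :: "'a::cstar_algebra"
  assumes vN: "von_neumann_algebra TYPE('a)" and x: "positive_elem x" and t: "norm x \<le> t"
  shows "norm (of_real t - x) \<le> t"
proof (rule norm_hermitian_le_real_spectral_bound[OF vN])
  show "adj (of_real t - x) = of_real t - x" using x by (simp add: positive_elem_def)
  show "0 \<le> t" using t norm_ge_zero order_trans by blast
  fix a assume a: "t < \<bar>a\<bar>"
  have "has_inverse (of_real (a - t) + x)"
  proof (cases "a > t")
    case True
    then show ?thesis by (intro has_inverse_of_real_plus_positive x) simp
  next
    case False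
    then show ?thesis using a t by (intro has_inverse_of_real_plus) auto
  qed
  then show "has_inverse (of_real a - (of_real t - x))" by (simp add: algebra_simps)
qed

lemma positive_elem_add: "positive_elem x \<Longrightarrow> positive_elem y \<Longrightarrow> positive_elem (x + y)"
proof -
  assume x: "positive_elem x" and y: "positive_elem y"
  obtain r where r: "r \<ge> 0" "norm (of_real r - x) \<le> r" using x by (auto simp: positive_elem_def)
  obtain s where s: "s \<ge> 0" "norm (of_real s - y) \<le> s" using y by (auto simp: positive_elem_def)
  have "norm (of_real (r + s) - (x + y)) = norm ((of_real r - x) + (of_real s - y))"
    by (simp add: algebra_simps)
  also have "\<dots> \<le> r + s" using r s norm_triangle_ineq[of "of_real r - x" "of_real s - y"] by linarith
  finally show "positive_elem (x + y)"
    using x y r s unfolding positive_elem_def by (auto simp: adj_add intro!: exI[of _ "r + s"])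
qed

lemma positive_elem_scaleR: "positive_elem x \<Longrightarrow> 0 \<le> c \<Longrightarrow> positive_elem (c *\<^sub>R x)"
proof -
  assume x: "positive_elem x" and c: "0 \<le> c"
  obtain r where r: "r \<ge> 0" "norm (of_real r - x) \<le> r" using x by (auto simp: positive_elem_def)
  have "of_real (c * r) - c *\<^sub>R x = c *\<^sub>R (of_real r - x)"
    by (simp add: of_real_def scaleR_diff_right)
  then have "norm (of_real (c * r) - c *\<^sub>R x) = c * norm (of_real r - x)" using c by simp
  also have "\<dots> \<le> c * r" using c r by (simp add: mult_left_mono)
  finally show "positive_elem (c *\<^sub>R x)"
    using x r c unfolding positive_elem_def by (auto simp: adj_scaleR intro!: exI[of _ "c * r"])
qed

lemma positive_elem_square:
  fixes h :: "'a::cstar_algebra"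
  assumes vN: "von_neumann_algebra TYPE('a)" and h: "adj h = h"
  shows "positive_elem (h * h)"
proof -
  let ?r = "norm (h * h)"
  have "norm (of_real ?r - h * h) \<le> ?r"
  proof (rule norm_hermitian_le_real_spectral_bound[OF vN])
    show "adj (of_real ?r - h * h) = of_real ?r - h * h" by (simp add: adj_mult h)
    fix a assume a: "?r < \<bar>a\<bar>"
    have "has_inverse (of_real (a - ?r) + h * h)"
    proof (cases "a > ?r")
      case True
      then show ?thesis by (intro has_inverse_of_real_plus_square h) simp
    next
      case False
      then show ?thesis using a by (intro has_inverse_of_real_plus) auto
    qed
    then show "has_inverse (of_real a - (of_real ?r - h * h))" by (simp add: algebra_simps)
  qed simp
  then show ?thesis unfolding positive_elem_def using h by (auto simp: adj_mult intro!: exI[of _ ?r])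
qed

text \<open>Writing \<open>u = (a - i b)/2\<close> with hermitian \<open>a = u + u\<^sup>*\<close>, \<open>b = i (u - u\<^sup>*)\<close> gives
  \<open>u\<^sup>* u + u u\<^sup>* = (a\<^sup>2 + b\<^sup>2) / 2\<close>.\<close>

lemma positive_elem_adj_mult_plus_mult_adj:
  fixes u :: "'a::cstar_algebra"
  assumes vN: "von_neumann_algebra TYPE('a)"
  shows "positive_elem (adj u * u + u * adj u)"
proof -
  define j :: 'a where "j = of_complex (- \<i>)"
  have jj: "j * j = - 1" unfolding j_def by (simp flip: of_complex_mult add: of_complex_minus)
  have jc: "\<And>x. j * x = x * j" unfolding j_def by (rule of_complex_commute)
  have aj: "adj j = - j" unfolding j_def by (simp add: adj_of_complex of_complex_minus)
  define a where "a = u + adj u"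
  define b where "b = j * (u - adj u)"
  have ha: "adj a = a" unfolding a_def by (simp add: adj_add adj_adj add.commute)
  have hb: "adj b = b" unfolding b_def by (simp add: adj_mult aj adj_adj jc algebra_simps)
  have "b * b = (j * j) * ((u - adj u) * (u - adj u))" unfolding b_def by (metis jc mult.assoc)
  then have "a * a + b * b = 2 *\<^sub>R (adj u * u + u * adj u)"
    unfolding a_def by (simp add: jj algebra_simps scaleR_2)
  then have "adj u * u + u * adj u = (1/2) *\<^sub>R (a * a + b * b)" by simp
  moreover have "positive_elem (a * a + b * b)"
    using positive_elem_square[OF vN ha] positive_elem_square[OF vN hb] by (rule positive_elem_add)
  ultimately show ?thesis by (simp add: positive_elem_scaleR)
qed

text \<open>The spectrum of \<open>u\<^sup>* u = - w\<^sup>2\<close> is nonpositive, while that of \<open>u u\<^sup>* = (u\<^sup>* u + u u\<^sup>*) + w\<^sup>2\<close>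
  is nonnegative; the two agree away from \<open>0\<close>, so \<open>u\<^sup>* u\<close> has spectrum \<open>{0}\<close>.\<close>

lemma adj_mult_self_eq_minus_square_imp_zero:
  fixes u w :: "'a::cstar_algebra"
  assumes vN: "von_neumann_algebra TYPE('a)" and w: "adj w = w"
    and e: "adj u * u = - (w * w)"
  shows "u = 0" "w = 0"
proof -
  have pw: "positive_elem (w * w)" by (rule positive_elem_square[OF vN w])
  have pQ: "positive_elem (u * adj u)"
    using positive_elem_add[OF positive_elem_adj_mult_plus_mult_adj[OF vN, of u] pw] e by simp
  have "norm (adj u * u) \<le> 0"
  proof (rule norm_hermitian_le_real_spectral_bound[OF vN])
    show "adj (adj u * u) = adj u * u" by (simp add: adj_mult adj_adj)
    fix a :: real assume a: "0 < \<bar>a\<bar>"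
    show "has_inverse (of_real a - adj u * u)"
    proof (cases "a > 0")
      case True
      then show ?thesis using has_inverse_of_real_plus_positive[OF pw] e by simp
    next
      case False
      then have "has_inverse (of_complex (complex_of_real a) - u * adj u)"
        using has_inverse_minus[OF has_inverse_of_real_plus_positive[OF pQ, of "- a"]] a
        by (simp add: of_complex_of_real)
      then show ?thesis
        using has_inverse_of_complex_minus_mult_commute[of "complex_of_real a" u "adj u"] a
        by (simp add: of_complex_of_real)
    qed
  qed simp
  then have "adj u * u = 0" by simp
  then show "u = 0" by simp
  then have "w * w = 0" using e by simp
  then show "w = 0" using norm_square_hermitian[OF w] by simp
qed

definition binomial_series_coeff :: "real \<Rightarrow> nat \<Rightarrow> real" where
  "binomial_series_coeff a n = (-1) ^ n * (a gchoose n)"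

lemma binomial_series_coeff_0 [simp]: "binomial_series_coeff a 0 = 1"
  by (simp add: binomial_series_coeff_def)

lemma binomial_series_coeff_Suc:
  "binomial_series_coeff a (Suc n) = binomial_series_coeff a n * (of_nat n - a) / of_nat (Suc n)"
proof -
  have "of_nat (Suc n) * (a gchoose Suc n) = (a gchoose n) * (a - of_nat n)"
    using gbinomial_mult_1[of a n] by (simp add: algebra_simps)
  then have "(a gchoose Suc n) = (a gchoose n) * (a - of_nat n) / of_nat (Suc n)"
    by (simp add: eq_divide_eq mult.commute del: of_nat_Suc)
  then show ?thesis unfolding binomial_series_coeff_def power_Suc by (simp add: algebra_simps)
qed

lemma binomial_series_coeff_nonpos:
  assumes "0 \<le> a" "a \<le> 1" "1 \<le> n"
  shows "binomial_series_coeff a n \<le> 0"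
  using assms(3)
proof (induct n)
  case (Suc n)
  show ?case
  proof (cases "n = 0")
    case True
    then show ?thesis using assms by (simp add: binomial_series_coeff_def)
  next
    case False
    then have "binomial_series_coeff a n \<le> 0" and "0 \<le> of_nat n - a"
      using Suc assms by auto
    then show ?thesis
      by (simp add: binomial_series_coeff_Suc divide_nonpos_pos mult_nonpos_nonneg)
  qed
qed simp

lemma binomial_series_coeff_minus_one_nonneg:
  assumes "a \<le> 1"
  shows "0 \<le> binomial_series_coeff (a - 1) n"
  by (induct n) (use assms in \<open>simp_all add: binomial_series_coeff_Suc\<close>)

lemma sum_binomial_series_coeff:
  "(\<Sum>k\<le>m. binomial_series_coeff a k) = binomial_series_coeff (a - 1) m"
  unfolding binomial_series_coeff_def using gbinomial_sum_lower_neg[of a m]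
  by (simp add: mult.commute)

text \<open>For \<open>0 \<le> a \<le> 1\<close> all coefficients but the first are nonpositive and the partial
  sums stay nonnegative, so the series converges absolutely on the closed unit disc.\<close>

lemma summable_abs_binomial_series_coeff:
  assumes "0 \<le> a" "a \<le> 1"
  shows "summable (\<lambda>n. \<bar>binomial_series_coeff a n\<bar>)"
proof (rule summableI_nonneg_bounded[where x = 2])
  show "(\<Sum>k<n. \<bar>binomial_series_coeff a k\<bar>) \<le> 2" for n
  proof (cases n)
    case (Suc m)
    have "(\<Sum>k<n. \<bar>binomial_series_coeff a k\<bar>) = (\<Sum>k\<le>m. \<bar>binomial_series_coeff a k\<bar>)"
      using Suc lessThan_Suc_atMost by simp
    also have "\<dots> = (\<Sum>k\<le>m. (if k = 0 then 2 else 0) - binomial_series_coeff a k)"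
      by (rule sum.cong) (use binomial_series_coeff_nonpos[OF assms] in auto)
    also have "\<dots> = 2 - binomial_series_coeff (a - 1) m"
      by (simp add: sum_subtractf sum_binomial_series_coeff)
    also have "\<dots> \<le> 2" using binomial_series_coeff_minus_one_nonneg[OF assms(2)] by simp
    finally show ?thesis .
  qed simp
qed simp

lemma binomial_series_coeff_Vandermonde:
  "(\<Sum>i\<le>n. binomial_series_coeff a i * binomial_series_coeff b (n - i))
     = binomial_series_coeff (a + b) n"
proof -
  have "(\<Sum>i\<le>n. binomial_series_coeff a i * binomial_series_coeff b (n - i))
      = (-1) ^ n * (\<Sum>i\<le>n. (a gchoose i) * (b gchoose (n - i)))"
    unfolding sum_distrib_left
  proof (rule sum.cong)
    fix i assume "i \<in> {..n}"
    then have "(-1::real) ^ i * (-1) ^ (n - i) = (-1) ^ n" by (simp flip: power_add)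
    then show "binomial_series_coeff a i * binomial_series_coeff b (n - i)
        = (-1) ^ n * ((a gchoose i) * (b gchoose (n - i)))"
      unfolding binomial_series_coeff_def by (metis mult.assoc mult.left_commute)
  qed simp
  also have "(\<Sum>i\<le>n. (a gchoose i) * (b gchoose (n - i))) = (a + b) gchoose n"
    using gbinomial_Vandermonde[of a b n] by (simp add: atMost_atLeast0)
  finally show ?thesis by (simp add: binomial_series_coeff_def)
qed

lemma binomial_series_coeff_1:
  "binomial_series_coeff 1 n = (if n = 0 then 1 else if n = 1 then -1 else 0)"
proof (induct n)
  case (Suc n)
  then show ?case by (cases n) (simp_all add: binomial_series_coeff_Suc)
qed simp

text \<open>\<open>binomial_series a X\<close> is \<open>(1 - X)\<^sup>a\<close>.\<close>

definition binomial_series :: "real \<Rightarrow> 'a::cstar_algebra \<Rightarrow> 'a" where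
  "binomial_series a X = (\<Sum>n. binomial_series_coeff a n *\<^sub>R X ^ n)"

lemma summable_norm_binomial_series:
  fixes X :: "'a::cstar_algebra"
  assumes X: "norm X \<le> 1" and a: "0 \<le> a" "a \<le> 1"
  shows "summable (\<lambda>n. norm (binomial_series_coeff a n *\<^sub>R X ^ n))"
proof (rule summable_comparison_test[OF _ summable_abs_binomial_series_coeff[OF a]])
  have "norm (X ^ n) \<le> 1" for n
    using norm_power_ineq[of X n] X by (meson order_trans power_le_one norm_ge_zero)
  then show "\<exists>N. \<forall>n\<ge>N. norm (norm (binomial_series_coeff a n *\<^sub>R X ^ n)) \<le> \<bar>binomial_series_coeff a n\<bar>"
    by (simp add: mult_left_le)
qed

lemma summable_binomial_series:
  fixes X :: "'a::cstar_algebra"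
  assumes "norm X \<le> 1" "0 \<le> a" "a \<le> 1"
  shows "summable (\<lambda>n. binomial_series_coeff a n *\<^sub>R X ^ n)"
  using summable_norm_cancel[OF summable_norm_binomial_series[OF assms]] .

lemma binomial_series_add:
  fixes X :: "'a::cstar_algebra"
  assumes X: "norm X \<le> 1" and a: "0 \<le> a" and b: "0 \<le> b" and ab: "a + b \<le> 1"
  shows "binomial_series a X * binomial_series b X = binomial_series (a + b) X"
proof -
  have a1: "a \<le> 1" and b1: "b \<le> 1" using a b ab by linarith+
  have coeff_prod: "(\<Sum>i\<le>k. (binomial_series_coeff a i *\<^sub>R X ^ i) * (binomial_series_coeff b (k - i) *\<^sub>R X ^ (k - i)))
      = binomial_series_coeff (a + b) k *\<^sub>R X ^ k" for k
  proof -
    have "X ^ i * X ^ (k - i) = X ^ k" if "i \<le> k" for i using that by (simp flip: power_add)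
    then have "(\<Sum>i\<le>k. (binomial_series_coeff a i *\<^sub>R X ^ i) * (binomial_series_coeff b (k - i) *\<^sub>R X ^ (k - i)))
        = (\<Sum>i\<le>k. binomial_series_coeff a i * binomial_series_coeff b (k - i)) *\<^sub>R X ^ k"
      by (simp add: scaleR_sum_left mult.commute)
    then show ?thesis by (simp add: binomial_series_coeff_Vandermonde)
  qed
  have "(\<lambda>k. \<Sum>i\<le>k. (binomial_series_coeff a i *\<^sub>R X ^ i) * (binomial_series_coeff b (k - i) *\<^sub>R X ^ (k - i)))
      sums (binomial_series a X * binomial_series b X)"
    unfolding binomial_series_def
    by (rule Cauchy_product_sums[OF summable_norm_binomial_series[OF X a a1]
          summable_norm_binomial_series[OF X b b1]])
  then show ?thesis unfolding coeff_prod binomial_series_def by (simp add: sums_iff)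
qed

lemma binomial_series_1: "binomial_series 1 X = 1 - (X::'a::cstar_algebra)"
proof -
  have "binomial_series 1 X = (\<Sum>n\<in>{0,1}. binomial_series_coeff 1 n *\<^sub>R X ^ n)"
    unfolding binomial_series_def by (rule suminf_finite) (auto simp: binomial_series_coeff_1)
  then show ?thesis by (simp add: binomial_series_coeff_1)
qed

lemma adj_binomial_series:
  fixes X :: "'a::cstar_algebra"
  assumes X: "norm X \<le> 1" "adj X = X" and a: "0 \<le> a" "a \<le> 1"
  shows "adj (binomial_series a X) = binomial_series a X"
proof -
  have "adj (binomial_series a X) = (\<Sum>n. adj (binomial_series_coeff a n *\<^sub>R X ^ n))"
    unfolding binomial_series_def
    by (rule bounded_linear.suminf[OF bounded_linear_adj summable_binomial_series[OF X(1) a]])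
  then show ?thesis unfolding binomial_series_def by (simp add: adj_scaleR adj_power X(2))
qed

lemma binomial_series_commute:
  fixes X :: "'a::cstar_algebra"
  assumes X: "norm X \<le> 1" and a: "0 \<le> a" "a \<le> 1" and c: "y * X = X * y"
  shows "y * binomial_series a X = binomial_series a X * y"
proof -
  have s: "summable (\<lambda>n. binomial_series_coeff a n *\<^sub>R X ^ n)"
    by (rule summable_binomial_series[OF X a])
  have "y * X ^ n = X ^ n * y" for n
    using c by (induct n) (simp_all add: mult.assoc[symmetric], metis mult.assoc)
  then have "(\<Sum>n. y * (binomial_series_coeff a n *\<^sub>R X ^ n))
      = (\<Sum>n. (binomial_series_coeff a n *\<^sub>R X ^ n) * y)"
    by simp
  then show ?thesis
    unfolding binomial_series_def suminf_mult[OF s] suminf_mult2[OF s] .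
qed

text \<open>With \<open>r = \<parallel>h\<^sup>2\<parallel>\<close> and \<open>X = 1 - h\<^sup>2/r\<close> (so \<open>\<parallel>X\<parallel> \<le> 1\<close> by positivity of \<open>h\<^sup>2\<close>), the root
  is \<open>t = r\<^sup>1\<^sup>/\<^sup>4 (1 - X)\<^sup>1\<^sup>/\<^sup>4\<close>.\<close>

lemma fourth_root_of_square_exists:
  fixes h :: "'a::cstar_algebra"
  assumes vN: "von_neumann_algebra TYPE('a)" and h: "adj h = h"
  shows "\<exists>t. adj t = t \<and> (t * t) * (t * t) = h * h \<and>
           (\<forall>y. y * (h * h) = (h * h) * y \<longrightarrow> y * t = t * y)"
proof (cases "h * h = 0")
  case False
  define r where "r = norm (h * h)"
  have r: "0 < r" using False unfolding r_def by simp
  have "norm (of_real r - h * h) \<le> r"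
    unfolding r_def by (rule norm_of_real_minus_positive[OF vN positive_elem_square[OF vN h]]) simp
  define X where "X = (1 / r) *\<^sub>R (of_real r - h * h)"
  have "norm X = (1 / r) * norm (of_real r - h * h)" unfolding X_def using r by simp
  also have "\<dots> \<le> (1 / r) * r"
    using \<open>norm (of_real r - h * h) \<le> r\<close> r by (intro mult_left_mono) auto
  finally have X: "norm X \<le> 1" using r by simp
  have hX: "adj X = X" unfolding X_def by (simp add: adj_scaleR adj_mult h)
  define t where "t = root 4 r *\<^sub>R binomial_series (1/4) X"
  have tt: "t * t = (root 4 r * root 4 r) *\<^sub>R binomial_series (1/2) X"
    unfolding t_def using binomial_series_add[OF X, of "1/4" "1/4"] by simp
  have "root 4 r ^ 4 = r" using r by simp
  then have "(root 4 r * root 4 r) * (root 4 r * root 4 r) = r"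
    by (simp add: power4_eq_xxxx mult.assoc)
  then have "(t * t) * (t * t) = r *\<^sub>R binomial_series 1 X"
    unfolding tt using binomial_series_add[OF X, of "1/2" "1/2"] by simp
  also have "\<dots> = h * h"
    unfolding binomial_series_1 X_def using r by (simp add: scaleR_diff_right of_real_def)
  finally have t4: "(t * t) * (t * t) = h * h" .
  have "y * t = t * y" if "y * (h * h) = (h * h) * y" for y
  proof -
    have "y * X = X * y" unfolding X_def using that by (simp add: algebra_simps of_real_def)
    then show ?thesis unfolding t_def using binomial_series_commute[OF X, of "1/4" y] by simp
  qed
  moreover have "adj t = t" unfolding t_def by (simp add: adj_scaleR adj_binomial_series[OF X hX])
  ultimately show ?thesis using t4 by blast
qed (intro exI[of _ 0]; simp)

text \<open>Uniqueness of positive square roots: with \<open>d = y - t\<^sup>2\<close> one gets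
  \<open>d y d + d t\<^sup>2 d = d (y\<^sup>2 - t\<^sup>4) = 0\<close>, i.e. \<open>(z d)\<^sup>* (z d) = - (t d)\<^sup>2\<close> for \<open>y = z\<^sup>* z\<close>; hence
  \<open>d y d = d t\<^sup>2 d = 0\<close>, so \<open>d\<^sup>3 = 0\<close> and \<open>d = 0\<close>.\<close>

lemma positive_square_root_unique:
  fixes h t y z :: "'a::cstar_algebra"
  assumes vN: "von_neumann_algebra TYPE('a)"
    and t: "adj t = t" and t4: "(t * t) * (t * t) = h * h"
    and t_commute: "\<forall>y. y * (h * h) = (h * h) * y \<longrightarrow> y * t = t * y"
    and y: "y = adj z * z" and yy: "y * y = h * h"
  shows "y = t * t"
proof -
  let ?s = "t * t"
  have "y * (h * h) = (h * h) * y" unfolding yy[symmetric] by (simp add: mult.assoc)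
  then have yt: "y * t = t * y" using t_commute by blast
  have ys: "y * ?s = ?s * y" using yt by (metis mult.assoc)
  define d where "d = y - ?s"
  have hd: "adj d = d" unfolding d_def y by (simp add: adj_mult adj_adj t)
  have dt: "d * t = t * d" unfolding d_def by (simp add: algebra_simps yt mult.assoc)
  have "d * (y + ?s) = y * y + (y * ?s - ?s * y) - ?s * ?s"
    unfolding d_def by (simp add: algebra_simps)
  then have "d * (y + ?s) = 0" using ys yy t4 by simp
  moreover have "d * y * d + d * ?s * d = (d * (y + ?s)) * d" by (simp add: algebra_simps)
  ultimately have sum0: "d * y * d + d * ?s * d = 0" by simp
  have dyd: "adj (z * d) * (z * d) = d * y * d" unfolding y by (simp add: adj_mult hd mult.assoc)
  have dsd: "(t * d) * (t * d) = d * ?s * d"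
    using dt by (metis mult.assoc)
  have "adj (t * d) = t * d" by (simp add: adj_mult hd t dt)
  moreover have "adj (z * d) * (z * d) = - ((t * d) * (t * d))"
    unfolding dyd dsd using sum0 by (simp add: eq_neg_iff_add_eq_0)
  ultimately have "z * d = 0" "t * d = 0"
    using adj_mult_self_eq_minus_square_imp_zero[OF vN] by blast+
  then have "d * y * d = 0" "d * ?s * d = 0" using dyd dsd by simp_all
  then have "d * d * d = 0" unfolding d_def by (simp add: algebra_simps)
  then have "norm d ^ (2 ^ 2) = 0"
    using norm_power_two_power_hermitian[OF hd, of 2] by (simp add: numeral_eq_Suc mult.assoc)
  then show ?thesis unfolding d_def by simp
qed

lemma abs_in_eq:
  fixes h y0 :: "'a::cstar_algebra"
  assumes vN: "von_neumann_algebra TYPE('a)" and h: "adj h = h"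
    and y0: "positive_in S y0" "y0 * y0 = h * h"
  shows "abs_in S h = y0"
proof -
  obtain t where t: "adj t = t" "(t * t) * (t * t) = h * h"
    "\<forall>y. y * (h * h) = (h * h) * y \<longrightarrow> y * t = t * y"
    using fourth_root_of_square_exists[OF vN h] by blast
  have root: "y = t * t" if "positive_in S y" "y * y = h * h" for y
    using that positive_square_root_unique[OF vN t] unfolding positive_in_def by blast
  show ?thesis unfolding abs_in_def
  proof (rule the_equality)
    show "positive_in S y0 \<and> y0 * y0 = adj h * h" using y0 h by simp
    show "y = y0" if "positive_in S y \<and> y * y = adj h * h" for y
      using that root[of y] root[of y0] y0 h by auto
  qed
qed

lemma positive_in_adj: "positive_in S a \<Longrightarrow> adj a = a"
  unfolding positive_in_def by (auto simp: adj_mult adj_adj)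

lemma projection_one_minus: "projection p \<Longrightarrow> projection (1 - p)"
  unfolding projection_def by (simp add: algebra_simps)

lemma in_corner_iff:
  fixes p :: "'a::cstar_algebra"
  assumes "projection p"
  shows "y \<in> corner p \<longleftrightarrow> p * y * p = y"
proof
  assume "y \<in> corner p"
  then obtain x where "y = p * x * p" unfolding corner_def by blast
  moreover have "p * p = p" using assms by (simp add: projection_def)
  ultimately show "p * y * p = y" by (metis mult.assoc)
next
  assume "p * y * p = y"
  then show "y \<in> corner p" unfolding corner_def by (intro CollectI exI[of _ y]) simp
qed

lemma corner_self: "projection p \<Longrightarrow> p \<in> corner p"
  by (simp add: in_corner_iff projection_def)

lemma corner_zero: "projection p \<Longrightarrow> 0 \<in> corner p"
  by (simp add: in_corner_iff)

lemma corner_add: "projection p \<Longrightarrow> a \<in> corner p \<Longrightarrow> b \<in> corner p \<Longrightarrow> a + b \<in> corner p"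
  by (simp add: in_corner_iff algebra_simps)

lemma corner_diff: "projection p \<Longrightarrow> a \<in> corner p \<Longrightarrow> b \<in> corner p \<Longrightarrow> a - b \<in> corner p"
  by (simp add: in_corner_iff algebra_simps)

lemma corner_mult:
  fixes p :: "'a::cstar_algebra"
  assumes p: "projection p" and a: "a \<in> corner p" and b: "b \<in> corner p"
  shows "a * b \<in> corner p"
proof -
  have "p * p = p" using p by (simp add: projection_def)
  then have "p * ((p * a * p) * (p * b * p)) * p = (p * a * p) * (p * b * p)"
    by (metis mult.assoc)
  then show ?thesis using a b by (simp add: in_corner_iff[OF p])
qed

lemma corner_mult_orthogonal:
  fixes p a b :: "'a::cstar_algebra"
  assumes p: "projection p" and a: "a \<in> corner p" and b: "b \<in> corner (1 - p)"
  shows "a * b = 0" "b * a = 0"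
proof -
  have "p * p = p" using p by (simp add: projection_def)
  then have pq: "p * (1 - p) = 0" "(1 - p) * p = 0" by (simp_all add: algebra_simps)
  have ea: "a = p * a * p" using a in_corner_iff[OF p] by simp
  have eb: "b = (1 - p) * b * (1 - p)" using b in_corner_iff[OF projection_one_minus[OF p]] by simp
  have "a * b = p * a * (p * (1 - p)) * b * (1 - p)" by (subst ea, subst eb) (simp add: mult.assoc)
  then show "a * b = 0" using pq by simp
  have "b * a = (1 - p) * b * ((1 - p) * p) * a * p" by (subst ea, subst eb) (simp add: mult.assoc)
  then show "b * a = 0" using pq by simp
qed

lemma corner_hermitian_compress:
  fixes p a :: "'a::cstar_algebra"
  assumes "projection p" and "adj a = a"
  shows "adj (p * a * p) = p * a * p"
  using assms by (simp add: adj_mult projection_def mult.assoc)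

lemma compress_orthogonal_sum:
  fixes p :: "'a::cstar_algebra"
  assumes p: "projection p" and a1: "a1 \<in> corner p" and a2: "a2 \<in> corner (1 - p)"
  shows "p * (a1 + a2) * p = a1" "(1 - p) * (a1 + a2) * (1 - p) = a2"
proof -
  have q: "projection (1 - p)" by (rule projection_one_minus[OF p])
  have "p * a2 = 0" using corner_mult_orthogonal(1)[OF p corner_self[OF p] a2] .
  then show "p * (a1 + a2) * p = a1" using a1 in_corner_iff[OF p] by (simp add: algebra_simps)
  have "(1 - p) * a1 = 0" using corner_mult_orthogonal(2)[OF p a1 corner_self[OF q]] .
  then show "(1 - p) * (a1 + a2) * (1 - p) = a2" using a2 in_corner_iff[OF q] by (simp add: algebra_simps)
qed

lemma orthogonal_sum_eq_one_iff:
  fixes p :: "'a::cstar_algebra"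
  assumes p: "projection p" and A: "A \<in> corner p" and B: "B \<in> corner (1 - p)"
  shows "A + B = 1 \<longleftrightarrow> A = p \<and> B = 1 - p"
proof
  assume "A + B = 1"
  moreover have "p * p = p" using p by (simp add: projection_def)
  ultimately show "A = p \<and> B = 1 - p"
    using compress_orthogonal_sum[OF p A B] by (metis add_diff_cancel_left' mult_1_left mult_1_right)
qed simp

text \<open>The fourth root of \<open>x\<^sup>2\<close> for \<open>x \<in> p M p\<close> annihilates \<open>1 - p\<close> (C*-identity applied twice),
  so it lies in \<open>p M p\<close> as well.\<close>

lemma fourth_root_in_corner:
  fixes p x t :: "'a::cstar_algebra"
  assumes p: "projection p" and x: "x \<in> corner p" "adj x = x"
    and t: "adj t = t" "(t * t) * (t * t) = x * x"
  shows "t \<in> corner p"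
proof -
  define q where "q = 1 - p"
  have hq: "adj q = q" using p unfolding q_def by (simp add: projection_def)
  have qx: "q * x = 0" unfolding q_def
    using corner_mult_orthogonal(2)[OF p x(1) corner_self[OF projection_one_minus[OF p]]] .
  have "adj (t * t * q) * (t * t * q) = q * ((t * t) * (t * t)) * q"
    by (simp add: adj_mult t hq mult.assoc)
  also have "\<dots> = q * (x * x) * q" by (simp only: t(2))
  also have "\<dots> = 0" by (simp add: qx flip: mult.assoc)
  finally have "t * t * q = 0" by simp
  then have "adj (t * q) * (t * q) = 0" by (simp add: adj_mult t hq mult.assoc)
  then have tq: "t * q = 0" by simp
  have qt: "q * t = 0" using arg_cong[OF tq, of adj] by (simp add: adj_mult t hq)
  have "p * t * p = t" using tq qt unfolding q_def by (simp add: algebra_simps)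
  then show ?thesis using in_corner_iff[OF p] by simp
qed

lemma abs_in_corner:
  fixes p x :: "'a::cstar_algebra"
  assumes vN: "von_neumann_algebra TYPE('a)" and p: "projection p"
    and x: "x \<in> corner p" "adj x = x"
  obtains t where "t \<in> corner p" "adj t = t" "abs_in (corner p) x = t * t"
    "(t * t) * (t * t) = x * x"
proof -
  obtain t where t: "adj t = t" "(t * t) * (t * t) = x * x"
    using fourth_root_of_square_exists[OF vN x(2)] by blast
  have tc: "t \<in> corner p" by (rule fourth_root_in_corner[OF p x t])
  have "positive_in (corner p) (t * t)" unfolding positive_in_def using tc t by metis
  then have "abs_in (corner p) x = t * t" by (rule abs_in_eq[OF vN x(2) _ t(2)])
  then show ?thesis using that tc t by blast
qed

lemma abs_in_orthogonal_sum:
  fixes p x1 x2 :: "'a::cstar_algebra"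
  assumes vN: "von_neumann_algebra TYPE('a)" and p: "projection p"
    and x1: "x1 \<in> corner p" "adj x1 = x1" and x2: "x2 \<in> corner (1 - p)" "adj x2 = x2"
  shows "abs_in UNIV (x1 + x2) = abs_in (corner p) x1 + abs_in (corner (1 - p)) x2"
    "abs_in (corner p) x1 \<in> corner p" "abs_in (corner (1 - p)) x2 \<in> corner (1 - p)"
proof -
  have q: "projection (1 - p)" by (rule projection_one_minus[OF p])
  obtain t1 where t1: "t1 \<in> corner p" "adj t1 = t1" "abs_in (corner p) x1 = t1 * t1"
      "(t1 * t1) * (t1 * t1) = x1 * x1"
    using abs_in_corner[OF vN p x1] by blast
  obtain t2 where t2: "t2 \<in> corner (1 - p)" "adj t2 = t2" "abs_in (corner (1 - p)) x2 = t2 * t2"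
      "(t2 * t2) * (t2 * t2) = x2 * x2"
    using abs_in_corner[OF vN q x2] by blast
  have o12: "t1 * t2 = 0" "t2 * t1 = 0" using corner_mult_orthogonal[OF p t1(1) t2(1)] by auto
  have x12: "x1 * x2 = 0" "x2 * x1 = 0" using corner_mult_orthogonal[OF p x1(1) x2(1)] by auto
  have "(t1 * t1) * (t2 * t2) = t1 * (t1 * t2) * t2" "(t2 * t2) * (t1 * t1) = t2 * (t2 * t1) * t1"
    by (simp_all add: mult.assoc)
  then have s12: "(t1 * t1) * (t2 * t2) = 0" "(t2 * t2) * (t1 * t1) = 0" using o12 by simp_all
  have "(t1 * t1 + t2 * t2) * (t1 * t1 + t2 * t2) = (x1 + x2) * (x1 + x2)"
    by (simp only: distrib_left distrib_right s12 x12 t1(4) t2(4))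
  moreover have "adj (t1 + t2) * (t1 + t2) = t1 * t1 + t2 * t2"
    by (simp add: adj_add t1(2) t2(2) algebra_simps o12)
  then have "positive_in UNIV (t1 * t1 + t2 * t2)" unfolding positive_in_def by (metis UNIV_I)
  moreover have "adj (x1 + x2) = x1 + x2" by (simp add: adj_add x1 x2)
  ultimately have "abs_in UNIV (x1 + x2) = t1 * t1 + t2 * t2" using abs_in_eq[OF vN] by blast
  then show "abs_in UNIV (x1 + x2) = abs_in (corner p) x1 + abs_in (corner (1 - p)) x2"
    using t1(3) t2(3) by simp
  show "abs_in (corner p) x1 \<in> corner p" using t1 corner_mult[OF p] by simp
  show "abs_in (corner (1 - p)) x2 \<in> corner (1 - p)" using t2 corner_mult[OF q] by simp
qed

lemma abs_compatible_in_orthogonal_sum_iff: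
  fixes a1 a2 b1 b2 p :: "'a::cstar_algebra"
  assumes vN: "von_neumann_algebra TYPE('a)" and p: "projection p"
    and a1: "a1 \<in> corner p" "adj a1 = a1" and a2: "a2 \<in> corner (1 - p)" "adj a2 = a2"
    and b1: "b1 \<in> corner p" "adj b1 = b1" and b2: "b2 \<in> corner (1 - p)" "adj b2 = b2"
  shows "abs_compatible_in UNIV 1 (a1 + a2) (b1 + b2) \<longleftrightarrow>
           abs_compatible_in (corner p) p a1 b1 \<and> abs_compatible_in (corner (1 - p)) (1 - p) a2 b2"
proof -
  have q: "projection (1 - p)" by (rule projection_one_minus[OF p])
  have hp: "adj p = p" using p by (simp add: projection_def)
  note diff1 = corner_diff[OF p] and diff2 = corner_diff[OF q]
  have x1: "a1 - b1 \<in> corner p" "p - a1 - b1 \<in> corner p"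
    using a1 b1 diff1 corner_self[OF p] by blast+
  have x2: "a2 - b2 \<in> corner (1 - p)" "(1 - p) - a2 - b2 \<in> corner (1 - p)"
    using a2 b2 diff2 corner_self[OF q] by blast+
  have h1: "adj (a1 - b1) = a1 - b1" "adj (p - a1 - b1) = p - a1 - b1" using a1 b1 hp by simp_all
  have h2: "adj (a2 - b2) = a2 - b2" "adj ((1 - p) - a2 - b2) = (1 - p) - a2 - b2"
    using a2 b2 hp by simp_all
  note abs_diff = abs_in_orthogonal_sum[OF vN p x1(1) h1(1) x2(1) h2(1)]
  note abs_compl = abs_in_orthogonal_sum[OF vN p x1(2) h1(2) x2(2) h2(2)]
  let ?A1 = "abs_in (corner p) (a1 - b1)" and ?A2 = "abs_in (corner (1 - p)) (a2 - b2)"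
  let ?B1 = "abs_in (corner p) (p - a1 - b1)"
  let ?B2 = "abs_in (corner (1 - p)) ((1 - p) - a2 - b2)"
  have "a1 + a2 - (b1 + b2) = (a1 - b1) + (a2 - b2)"
    and "1 - (a1 + a2) - (b1 + b2) = (p - a1 - b1) + ((1 - p) - a2 - b2)" by simp_all
  then have "abs_compatible_in UNIV 1 (a1 + a2) (b1 + b2) \<longleftrightarrow>
      abs_in UNIV ((a1 - b1) + (a2 - b2)) + abs_in UNIV ((p - a1 - b1) + ((1 - p) - a2 - b2)) = 1"
    unfolding abs_compatible_in_def by (simp only:)
  also have "\<dots> \<longleftrightarrow> (?A1 + ?B1) + (?A2 + ?B2) = 1"
    unfolding abs_diff(1) abs_compl(1) by (simp only: ac_simps)
  also have "\<dots> \<longleftrightarrow> ?A1 + ?B1 = p \<and> ?A2 + ?B2 = 1 - p"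
    by (intro orthogonal_sum_eq_one_iff[OF p] corner_add[OF p] corner_add[OF q] abs_diff(2,3)
        abs_compl(2,3))
  finally show ?thesis unfolding abs_compatible_in_def .
qed


lemma abs_in_projection:
  fixes e :: "'a::cstar_algebra"
  assumes vN: "von_neumann_algebra TYPE('a)" and e: "projection e" "e \<in> S"
  shows "abs_in S e = e"
proof (rule abs_in_eq[OF vN])
  show "adj e = e" using e by (simp add: projection_def)
  then show "positive_in S e" using e unfolding positive_in_def projection_def by metis
qed simp

lemma abs_compatible_in_corner_zero:
  fixes p :: "'a::cstar_algebra"
  assumes "von_neumann_algebra TYPE('a)" and "projection p"
  shows "abs_compatible_in (corner p) p 0 0"
  using abs_in_projection[OF assms(1) _ corner_zero[OF assms(2)]]
    abs_in_projection[OF assms(1) assms(2) corner_self[OF assms(2)]]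
  by (simp add: abs_compatible_in_def projection_def)

theorem lemma2p6:
  fixes a b p :: "'a::cstar_algebra"
  assumes vN: "von_neumann_algebra TYPE('a)"
    and a0: "positive_in UNIV a" and a1: "le_in UNIV a 1"
    and b0: "positive_in UNIV b" and b1: "le_in UNIV b 1"
    and p: "projection p"
  shows "(a \<in> corner p \<and> b \<in> corner p \<longrightarrow>
            (abs_compatible_in UNIV 1 a b \<longleftrightarrow> abs_compatible_in (corner p) p a b))
       \<and> (a \<in> {x + y | x y. x \<in> corner p \<and> y \<in> corner (1 - p)} \<and>
          b \<in> {x + y | x y. x \<in> corner p \<and> y \<in> corner (1 - p)} \<longrightarrow>
            (abs_compatible_in UNIV 1 a b \<longleftrightarrow>
               abs_compatible_in (corner p) p (p * a * p) (p * b * p) \<and>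
               abs_compatible_in (corner (1 - p)) (1 - p)
                  ((1 - p) * a * (1 - p)) ((1 - p) * b * (1 - p))))"
proof (intro conjI impI)
  have q: "projection (1 - p)" by (rule projection_one_minus[OF p])
  have ha: "adj a = a" and hb: "adj b = b" using a0 b0 by (simp_all add: positive_in_adj)
  assume "a \<in> {x + y | x y. x \<in> corner p \<and> y \<in> corner (1 - p)} \<and>
          b \<in> {x + y | x y. x \<in> corner p \<and> y \<in> corner (1 - p)}"
  then obtain a1 a2 b1 b2 where a: "a = a1 + a2" "a1 \<in> corner p" "a2 \<in> corner (1 - p)"
    and b: "b = b1 + b2" "b1 \<in> corner p" "b2 \<in> corner (1 - p)" by blast
  have compress: "p * a * p = a1" "(1 - p) * a * (1 - p) = a2"
      "p * b * p = b1" "(1 - p) * b * (1 - p) = b2"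
    unfolding a(1) b(1) compress_orthogonal_sum[OF p a(2,3)] compress_orthogonal_sum[OF p b(2,3)]
    by (rule refl)+
  have "adj a1 = a1" "adj a2 = a2" "adj b1 = b1" "adj b2 = b2"
    using corner_hermitian_compress[OF p] corner_hermitian_compress[OF q] ha hb
    by (simp_all flip: compress)
  from abs_compatible_in_orthogonal_sum_iff[OF vN p a(2) this(1) a(3) this(2) b(2) this(3) b(3) this(4)]
  show "abs_compatible_in UNIV 1 a b \<longleftrightarrow>
      abs_compatible_in (corner p) p (p * a * p) (p * b * p) \<and>
      abs_compatible_in (corner (1 - p)) (1 - p) ((1 - p) * a * (1 - p)) ((1 - p) * b * (1 - p))"
    by (simp only: compress a(1)[symmetric] b(1)[symmetric])
next
  have q: "projection (1 - p)" by (rule projection_one_minus[OF p])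
  have ha: "adj a = a" and hb: "adj b = b" using a0 b0 by (simp_all add: positive_in_adj)
  assume "a \<in> corner p \<and> b \<in> corner p"
  then show "abs_compatible_in UNIV 1 a b \<longleftrightarrow> abs_compatible_in (corner p) p a b"
    using abs_compatible_in_orthogonal_sum_iff[OF vN p _ ha corner_zero[OF q] _ _ hb corner_zero[OF q]]
      abs_compatible_in_corner_zero[OF vN q]
    by simp
qed

end
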